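(* Let $0\le b<d\le n$ be integers and fix a homological degree. (1) If $\hat z$ is a relative cycle of $\hat K(b,d]$ that contains $\tau\times\{d\}$ with $\min\tau=d$ and whose boundary contains $\sigma\times\{b\}$ with $\min\sigma=b$, then $[\hat z]$ lies neither in the image of $H(\hat K(b-1,d])$ nor in the image of $H(\hat K(b,d-1])$ in $H(\hat K(b,d])$ (i.e. $\hat z$ is an apex representative). (2) If $\hat z$ is a relative cycle of $\hat K[b,d)$ that contains $\tau\times\{b\}$ with $\max\tau=b$ and whose boundary contains $\sigma\times\{d\}$ with $\max\sigma=d$, then $[\hat z]$ lies neither in the image of $H(\hat K[b+1,d))$ nor in the image of $H(\hat K[b,d+1))$ in $H(\hat K[b,d))$. (3) If $\hat z$ is a cycle of $\hat K[b,d]$ that contains $\sigma\times\{b\}$ and $\tau\times\{d\}$ with $\max\sigma=b$ and $\min\tau=d$, then $[\hat z]$ lies neither in the image of $H(\hat K[b+1,d])$ nor in the image of $H(\hat K[b,d-1])$ in $H(\hat K[b,d])$. (4) If $\hat z$ is a relative cycle of $\hat K(b,d)$ whose boundary contains $\sigma\times\{b\}$ with $\min\sigma=b$ and $\tau\times\{d\}$ with $\max\tau=d$, then $[\hat z]$ lies neither in the image of $H(\hat K(b-1,d))$ nor in the image of $H(\hat K(b,d+1))$ in $H(\hat K(b,d))$.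
   Context: Fix a field $\mathbb F$; all chains and homology groups have coefficients in $\mathbb F$. Let $n\ge 1$ and let $K$ be a finite $\Delta$-complex (distinct simplices may have the same boundary) in which every simplex $\sigma$ carries an integer interval $T(\sigma)=[\min\sigma,\max\sigma]\subseteq[0,n]$ with $\min\sigma<\max\sigma$, such that for each integer $i$ the set $K_i=\{\sigma: i\in T(\sigma)\}$ is a subcomplex (these form a zigzag $K_0\to K_1\leftarrow K_2\to\cdots$), and such that whenever $\sigma$ is a proper face of $\tau$ we have $\min\sigma<\min\tau<\max\tau<\max\sigma$. The prism $\hat K$ is the cell complex whose cells are the vertical cells $\sigma\times\{i\}$ for $\sigma\in K$ and integers $i\in T(\sigma)$ (of dimension $\dim\sigma$) and the horizontal cells $\sigma\times[i,i+1]$ for integers $i$ with $[i,i+1]\subseteq T(\sigma)$ (of dimension $\dim\sigma+1$), with boundary $\partial(\sigma\times\{i\})=(\partial\sigma)\times\{i\}$ and $\partial(\sigma\times[i,i+1])=(\partial\sigma)\times[i,i+1]+(-1)^{\dim\sigma}(\sigma\times\{i+1\}-\sigma\times\{i\})$ (terms not in $\hat K$ do not occur). For integers $i\le j$, $\hat K_i^j$ is the subcomplex of cells $\sigma\times T$ with $T\subseteq[i,j]$; so $\hat K_{-1}^{n+1}=\hat K$. For integers $b\le d$ define the pairs $\hat K[b,d]=(\hat K_b^d,\emptyset)$, $\hat K(b,d]=(\hat K_{-1}^d,\hat K_{-1}^b)$, $\hat K[b,d)=(\hat K_b^{n+1},\hat K_d^{n+1})$, $\hat K(b,d)=(\hat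 K,\hat K_{-1}^b\cup\hat K_d^{n+1})$, and write $H(\cdot)$ for their relative homology; maps between these groups are induced by inclusions of pairs. A relative cycle of a pair $(X,A)$ is a chain in $X$ whose boundary lies in $A$. A chain "contains" a cell if the cell's coefficient is nonzero. *)

theory Defs
  imports Main
begin

text \<open>A finite Delta-complex (semi-simplicial set) whose simplices carry integer
  intervals [smin, smax].  Simplices have type 'a; the i-th face of a simplex s of
  dimension d > 0 is sface s i (0 <= i <= d).\<close>

record 'a fcomplex =
  simp  :: "'a set"
  sdim  :: "'a \<Rightarrow> nat"
  sface :: "'a \<Rightarrow> nat \<Rightarrow> 'a"
  smin  :: "'a \<Rightarrow> int"
  smax  :: "'a \<Rightarrow> int"

definition imm_face :: "'a fcomplex \<Rightarrow> 'a \<Rightarrow> 'a \<Rightarrow> bool" where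
  "imm_face C t s \<longleftrightarrow> t \<in> simp C \<and> 0 < sdim C t \<and> (\<exists>k\<le>sdim C t. s = sface C t k)"

definition proper_face :: "'a fcomplex \<Rightarrow> 'a \<Rightarrow> 'a \<Rightarrow> bool" where
  "proper_face C s t \<longleftrightarrow> (imm_face C)\<^sup>+\<^sup>+ t s"

definition filtered_dcomplex :: "'a fcomplex \<Rightarrow> int \<Rightarrow> bool" where
  "filtered_dcomplex C n \<longleftrightarrow>
     finite (simp C)
   \<and> (\<forall>s\<in>simp C. 0 < sdim C s \<longrightarrow>
        (\<forall>k\<le>sdim C s. sface C s k \<in> simp C \<and> sdim C (sface C s k) = sdim C s - 1))
   \<and> (\<forall>s\<in>simp C. 2 \<le> sdim C s \<longrightarrow>
        (\<forall>i j. i < j \<and> j \<le> sdim C s \<longrightarrow>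
           sface C (sface C s j) i = sface C (sface C s i) (j - 1)))
   \<and> (\<forall>s\<in>simp C. 0 \<le> smin C s \<and> smin C s < smax C s \<and> smax C s \<le> n)
   \<and> (\<forall>i. \<forall>s\<in>simp C. smin C s \<le> i \<and> i \<le> smax C s \<and> 0 < sdim C s \<longrightarrow>
        (\<forall>k\<le>sdim C s. smin C (sface C s k) \<le> i \<and> i \<le> smax C (sface C s k)))
   \<and> (\<forall>s t. proper_face C s t \<longrightarrow>
        smin C s < smin C t \<and> smin C t < smax C t \<and> smax C t < smax C s)"

text \<open>Cells of the prism: Vc s i = s x {i}, Hc s i = s x [i,i+1].\<close>
datatype 'a cell = Vc 'a int | Hc 'a int

definition prism :: "'a fcomplex \<Rightarrow> 'a cell set" where
  "prism C = {Vc s i | s i. s \<in> simp C \<and> smin C s \<le> i \<and> i \<le> smax C s}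
           \<union> {Hc s i | s i. s \<in> simp C \<and> smin C s \<le> i \<and> i + 1 \<le> smax C s}"

fun cdim :: "'a fcomplex \<Rightarrow> 'a cell \<Rightarrow> nat" where
  "cdim C (Vc s i) = sdim C s"
| "cdim C (Hc s i) = sdim C s + 1"

text \<open>Subcomplex hat K_i^j: cells s x T with T contained in [i,j].\<close>
definition prism_sub :: "'a fcomplex \<Rightarrow> int \<Rightarrow> int \<Rightarrow> 'a cell set" where
  "prism_sub C i j = {c \<in> prism C. case c of Vc s t \<Rightarrow> i \<le> t \<and> t \<le> j
                                           | Hc s t \<Rightarrow> i \<le> t \<and> t + 1 \<le> j}"

text \<open>Coefficient of cell x in the boundary of cell y.\<close>
fun bcoef :: "'a fcomplex \<Rightarrow> 'a cell \<Rightarrow> 'a cell \<Rightarrow> 'f::field" where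
  "bcoef C (Vc s i) x =
     (if sdim C s = 0 then 0
      else (\<Sum>k\<in>{0..sdim C s}. if x = Vc (sface C s k) i then (-1)^k else 0))"
| "bcoef C (Hc s i) x =
     (if sdim C s = 0 then 0
      else (\<Sum>k\<in>{0..sdim C s}. if x = Hc (sface C s k) i then (-1)^k else 0))
     + (-1)^(sdim C s) * ((if x = Vc s (i + 1) then 1 else 0) - (if x = Vc s i then 1 else 0))"

definition bnd :: "'a fcomplex \<Rightarrow> ('a cell \<Rightarrow> 'f::field) \<Rightarrow> 'a cell \<Rightarrow> 'f" where
  "bnd C c = (\<lambda>x. \<Sum>y\<in>prism C. c y * bcoef C y x)"

definition is_chain :: "'a fcomplex \<Rightarrow> nat \<Rightarrow> 'a cell set \<Rightarrow> ('a cell \<Rightarrow> 'f::field) \<Rightarrow> bool" where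
  "is_chain C p X c \<longleftrightarrow> (\<forall>x. c x \<noteq> 0 \<longrightarrow> x \<in> X \<and> cdim C x = p)"

definition rel_cycle :: "'a fcomplex \<Rightarrow> nat \<Rightarrow> 'a cell set \<times> 'a cell set \<Rightarrow> ('a cell \<Rightarrow> 'f::field) \<Rightarrow> bool" where
  "rel_cycle C p P z \<longleftrightarrow> is_chain C p (fst P) z \<and> (\<forall>x. bnd C z x \<noteq> 0 \<longrightarrow> x \<in> snd P)"

text \<open>The class [z] in H_p(P) lies in the image of H_p(P') \<rightarrow> H_p(P) induced by inclusion:
  z is homologous in (X,A) to a relative cycle of P'.\<close>
definition in_image :: "'a fcomplex \<Rightarrow> nat \<Rightarrow> 'a cell set \<times> 'a cell set \<Rightarrow> 'a cell set \<times> 'a cell set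
                        \<Rightarrow> ('a cell \<Rightarrow> 'f::field) \<Rightarrow> bool" where
  "in_image C p P' P z \<longleftrightarrow>
     (\<exists>z' c. rel_cycle C p P' z' \<and> is_chain C (Suc p) (fst P) c \<and>
        (\<forall>x. z x - z' x - bnd C c x \<noteq> 0 \<longrightarrow> x \<in> snd P))"

definition Kcc :: "'a fcomplex \<Rightarrow> int \<Rightarrow> int \<Rightarrow> 'a cell set \<times> 'a cell set" where  \<comment> \<open>[b,d]\<close>
  "Kcc C b d = (prism_sub C b d, {})"
definition Koc :: "'a fcomplex \<Rightarrow> int \<Rightarrow> int \<Rightarrow> 'a cell set \<times> 'a cell set" where  \<comment> \<open>(b,d]\<close>
  "Koc C b d = (prism_sub C (-1) d, prism_sub C (-1) b)"
definition Kco :: "'a fcomplex \<Rightarrow> int \<Rightarrow> int \<Rightarrow> int \<Rightarrow> 'a cell set \<times> 'a cell set" where  \<comment> \<open>[b,d)\<close>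
  "Kco C n b d = (prism_sub C b (n + 1), prism_sub C d (n + 1))"
definition Koo :: "'a fcomplex \<Rightarrow> int \<Rightarrow> int \<Rightarrow> int \<Rightarrow> 'a cell set \<times> 'a cell set" where  \<comment> \<open>(b,d)\<close>
  "Koo C n b d = (prism_sub C (-1) (n + 1), prism_sub C (-1) b \<union> prism_sub C d (n + 1))"

end

theory Submission
  imports Defs
begin

(* Let t be an end of the interval of a simplex s (t = min s or t = max s). Faces have strictly
   larger intervals, so the vertical cell s x {t} has a single coface in the prism, the
   horizontal cell s x [t, t+1] (resp. s x [t-1, t]), and that horizontal cell has no coface
   at all. Hence neither the coefficient of a chain at s x {t} nor that of its boundary can be
   changed by adding boundaries and chains that avoid the horizontal cell, which is what being
   homologous to a relative cycle of the smaller pair amounts to in each of the eight cases. *)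

lemma Vc_in_prism_iff [simp]:
  "Vc s t \<in> prism C \<longleftrightarrow> s \<in> simp C \<and> smin C s \<le> t \<and> t \<le> smax C s"
  by (auto simp: prism_def)

lemma Hc_in_prism_iff [simp]:
  "Hc s t \<in> prism C \<longleftrightarrow> s \<in> simp C \<and> smin C s \<le> t \<and> t + 1 \<le> smax C s"
  by (auto simp: prism_def)

lemma Vc_in_prism_sub_iff [simp]:
  "Vc s t \<in> prism_sub C i j \<longleftrightarrow> Vc s t \<in> prism C \<and> i \<le> t \<and> t \<le> j"
  by (simp add: prism_sub_def)

lemma Hc_in_prism_sub_iff [simp]:
  "Hc s t \<in> prism_sub C i j \<longleftrightarrow> Hc s t \<in> prism C \<and> i \<le> t \<and> t + 1 \<le> j"
  by (simp add: prism_sub_def)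

lemma sface_interval_strict:
  assumes "filtered_dcomplex C n" and "r \<in> simp C" and "0 < sdim C r" and "k \<le> sdim C r"
  shows "smin C (sface C r k) < smin C r \<and> smax C r < smax C (sface C r k)"
proof -
  have "proper_face C (sface C r k) r"
    using assms(2-4) unfolding proper_face_def imm_face_def by blast
  then show ?thesis
    using assms(1) unfolding filtered_dcomplex_def by blast
qed

(* The cells occurring in the boundary formula bcoef; unlike the support of bcoef, this does
   not depend on the characteristic of the field. *)
fun cell_faces :: "'a fcomplex \<Rightarrow> 'a cell \<Rightarrow> 'a cell set" where
  "cell_faces C (Vc s i) = {Vc (sface C s k) i | k. 0 < sdim C s \<and> k \<le> sdim C s}"
| "cell_faces C (Hc s i) = {Hc (sface C s k) i | k. 0 < sdim C s \<and> k \<le> sdim C s}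
                          \<union> {Vc s i, Vc s (i + 1)}"

lemma Vc_in_cell_faces_iff:
  "Vc s t \<in> cell_faces C y \<longleftrightarrow>
     (\<exists>r k. y = Vc r t \<and> 0 < sdim C r \<and> k \<le> sdim C r \<and> s = sface C r k)
     \<or> y = Hc s t \<or> y = Hc s (t - 1)"
  by (cases y) auto

lemma Hc_in_cell_faces_iff:
  "Hc s t \<in> cell_faces C y \<longleftrightarrow>
     (\<exists>r k. y = Hc r t \<and> 0 < sdim C r \<and> k \<le> sdim C r \<and> s = sface C r k)"
  by (cases y) auto

lemma bcoef_eq_0_if_not_face:
  assumes "x \<notin> cell_faces C y"
  shows "bcoef C y x = (0 :: 'f::field)"
  using assms by (cases y) (auto intro!: sum.neutral)

definition cofaces :: "'a fcomplex \<Rightarrow> 'a cell \<Rightarrow> 'a cell set" where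
  "cofaces C x = {y \<in> prism C. x \<in> cell_faces C y}"

lemma bnd_eq_0_if_vanishes_on_cofaces:
  assumes "\<And>y. y \<in> cofaces C x \<Longrightarrow> g y = 0"
  shows "bnd C (g :: _ \<Rightarrow> 'f::field) x = 0"
  unfolding bnd_def
proof (rule sum.neutral, rule ballI)
  fix y assume "y \<in> prism C"
  then show "g y * bcoef C y x = 0"
    using assms bcoef_eq_0_if_not_face[of x C y] by (cases "y \<in> cofaces C x") (auto simp: cofaces_def)
qed

lemma bnd_diff: "bnd C (\<lambda>y. f y - g y) x = bnd C f x - bnd C (g :: _ \<Rightarrow> 'f::field) x"
  unfolding bnd_def by (simp add: left_diff_distrib sum_subtractf)

lemma cofaces_Vc_smin:
  assumes "filtered_dcomplex C n" and "smin C s = t"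
  shows "cofaces C (Vc s t) \<subseteq> {Hc s t}"
  using sface_interval_strict[OF assms(1)] assms(2)
  by (fastforce simp: cofaces_def Vc_in_cell_faces_iff)

lemma cofaces_Vc_smax:
  assumes "filtered_dcomplex C n" and "smax C s = t"
  shows "cofaces C (Vc s t) \<subseteq> {Hc s (t - 1)}"
  using sface_interval_strict[OF assms(1)] assms(2)
  by (fastforce simp: cofaces_def Vc_in_cell_faces_iff)

lemma cofaces_Hc_smin:
  assumes "filtered_dcomplex C n" and "smin C s = t"
  shows "cofaces C (Hc s t) = {}"
  using sface_interval_strict[OF assms(1)] assms(2)
  by (fastforce simp: cofaces_def Hc_in_cell_faces_iff)

lemma cofaces_Hc_smax:
  assumes "filtered_dcomplex C n" and "smax C s = t + 1"
  shows "cofaces C (Hc s t) = {}"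
  using sface_interval_strict[OF assms(1)] assms(2)
  by (fastforce simp: cofaces_def Hc_in_cell_faces_iff)

lemma not_in_image_if_coeff_nonzero:
  assumes "z x \<noteq> 0" and "cofaces C x \<subseteq> {u}"
    and "x \<notin> fst P'" and "x \<notin> snd P" and "u \<notin> fst P"
  shows "\<not> in_image C p P' P (z :: _ \<Rightarrow> 'f::field)"
proof
  assume "in_image C p P' P z"
  then obtain z' c where z': "rel_cycle C p P' z'" and c: "is_chain C (Suc p) (fst P) c"
    and hom: "\<forall>y. z y - z' y - bnd C c y \<noteq> 0 \<longrightarrow> y \<in> snd P"
    unfolding in_image_def by blast
  have "z' x = 0"
    using z' assms(3) unfolding rel_cycle_def is_chain_def by blast
  moreover have "bnd C c x = 0"
    using c assms(2,5) unfolding is_chain_def by (intro bnd_eq_0_if_vanishes_on_cofaces) blast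
  ultimately show False
    using hom assms(1,4) by auto
qed

lemma not_in_image_if_bnd_nonzero:
  assumes "bnd C z x \<noteq> 0" and "cofaces C x \<subseteq> {u}" and "cofaces C u = {}"
    and "x \<notin> snd P'" and "u \<notin> snd P"
  shows "\<not> in_image C p P' P (z :: _ \<Rightarrow> 'f::field)"
proof
  assume "in_image C p P' P z"
  then obtain z' c where z': "rel_cycle C p P' z'"
    and hom: "\<forall>y. z y - z' y - bnd C c y \<noteq> 0 \<longrightarrow> y \<in> snd P"
    unfolding in_image_def by blast
  have "bnd C z' x = 0"
    using z' assms(4) unfolding rel_cycle_def by blast
  \<comment> \<open>a local instance of \<open>\<partial>\<partial> = 0\<close>, which needs no simplicial identities\<close>
  moreover have "bnd C (bnd C c) x = 0"
    using assms(2,3) by (intro bnd_eq_0_if_vanishes_on_cofaces) blast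
  moreover have "bnd C (\<lambda>y. z y - z' y - bnd C c y) x = 0"
    using hom assms(2,5) by (intro bnd_eq_0_if_vanishes_on_cofaces) blast
  ultimately show False
    using assms(1) by (simp add: bnd_diff)
qed

lemma not_in_image_Koc:
  assumes f: "filtered_dcomplex C n" and "b < d"
    and \<tau>: "z (Vc \<tau> d) \<noteq> 0" "smin C \<tau> = d" and \<sigma>: "bnd C z (Vc \<sigma> b) \<noteq> 0" "smin C \<sigma> = b"
  shows "\<not> in_image C p (Koc C (b - 1) d) (Koc C b d) (z :: _ \<Rightarrow> 'f::field)
       \<and> \<not> in_image C p (Koc C b (d - 1)) (Koc C b d) z"
proof
  show "\<not> in_image C p (Koc C (b - 1) d) (Koc C b d) z"
    by (rule not_in_image_if_bnd_nonzero[OF \<sigma>(1)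
          cofaces_Vc_smin[OF f \<sigma>(2)] cofaces_Hc_smin[OF f \<sigma>(2)]]) (simp_all add: Koc_def)
  show "\<not> in_image C p (Koc C b (d - 1)) (Koc C b d) z"
    by (rule not_in_image_if_coeff_nonzero[OF _ cofaces_Vc_smin[OF f \<tau>(2)]])
      (use \<tau>(1) \<open>b < d\<close> in \<open>simp_all add: Koc_def\<close>)
qed

lemma not_in_image_Kco:
  assumes f: "filtered_dcomplex C n" and "b < d"
    and \<tau>: "z (Vc \<tau> b) \<noteq> 0" "smax C \<tau> = b" and \<sigma>: "bnd C z (Vc \<sigma> d) \<noteq> 0" "smax C \<sigma> = d"
  shows "\<not> in_image C p (Kco C n (b + 1) d) (Kco C n b d) (z :: _ \<Rightarrow> 'f::field)
       \<and> \<not> in_image C p (Kco C n b (d + 1)) (Kco C n b d) z"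
proof
  show "\<not> in_image C p (Kco C n (b + 1) d) (Kco C n b d) z"
    by (rule not_in_image_if_coeff_nonzero[OF _ cofaces_Vc_smax[OF f \<tau>(2)]])
      (use \<tau>(1) \<open>b < d\<close> in \<open>simp_all add: Kco_def\<close>)
  have "smax C \<sigma> = (d - 1) + 1" using \<sigma>(2) by simp
  then show "\<not> in_image C p (Kco C n b (d + 1)) (Kco C n b d) z"
    by (rule not_in_image_if_bnd_nonzero[OF \<sigma>(1)
          cofaces_Vc_smax[OF f \<sigma>(2)] cofaces_Hc_smax[OF f]]) (simp_all add: Kco_def)
qed

lemma not_in_image_Kcc:
  assumes f: "filtered_dcomplex C n"
    and \<sigma>: "z (Vc \<sigma> b) \<noteq> 0" "smax C \<sigma> = b" and \<tau>: "z (Vc \<tau> d) \<noteq> 0" "smin C \<tau> = d"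
  shows "\<not> in_image C p (Kcc C (b + 1) d) (Kcc C b d) (z :: _ \<Rightarrow> 'f::field)
       \<and> \<not> in_image C p (Kcc C b (d - 1)) (Kcc C b d) z"
proof
  show "\<not> in_image C p (Kcc C (b + 1) d) (Kcc C b d) z"
    by (rule not_in_image_if_coeff_nonzero[OF _ cofaces_Vc_smax[OF f \<sigma>(2)]])
      (use \<sigma>(1) in \<open>simp_all add: Kcc_def\<close>)
  show "\<not> in_image C p (Kcc C b (d - 1)) (Kcc C b d) z"
    by (rule not_in_image_if_coeff_nonzero[OF _ cofaces_Vc_smin[OF f \<tau>(2)]])
      (use \<tau>(1) in \<open>simp_all add: Kcc_def\<close>)
qed

lemma not_in_image_Koo:
  assumes f: "filtered_dcomplex C n" and "b < d"
    and \<sigma>: "bnd C z (Vc \<sigma> b) \<noteq> 0" "smin C \<sigma> = b" and \<tau>: "bnd C z (Vc \<tau> d) \<noteq> 0" "smax C \<tau> = d"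
  shows "\<not> in_image C p (Koo C n (b - 1) d) (Koo C n b d) (z :: _ \<Rightarrow> 'f::field)
       \<and> \<not> in_image C p (Koo C n b (d + 1)) (Koo C n b d) z"
proof
  show "\<not> in_image C p (Koo C n (b - 1) d) (Koo C n b d) z"
    by (rule not_in_image_if_bnd_nonzero[OF \<sigma>(1)
          cofaces_Vc_smin[OF f \<sigma>(2)] cofaces_Hc_smin[OF f \<sigma>(2)]])
      (use \<open>b < d\<close> in \<open>simp_all add: Koo_def\<close>)
  have "smax C \<tau> = (d - 1) + 1" using \<tau>(2) by simp
  then show "\<not> in_image C p (Koo C n b (d + 1)) (Koo C n b d) z"
    by (rule not_in_image_if_bnd_nonzero[OF \<tau>(1)
          cofaces_Vc_smax[OF f \<tau>(2)] cofaces_Hc_smax[OF f]])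
      (use \<open>b < d\<close> in \<open>simp_all add: Koo_def\<close>)
qed

theorem theorem5p3:
  fixes C :: "'a fcomplex" and n b d :: int and p :: nat
  assumes "filtered_dcomplex C n" and "1 \<le> n"
    and "0 \<le> b" and "b < d" and "d \<le> n"
  shows
   "(\<forall>(z :: 'a cell \<Rightarrow> 'f::field) \<tau> \<sigma>.
       rel_cycle C p (Koc C b d) z \<and> z (Vc \<tau> d) \<noteq> 0 \<and> smin C \<tau> = d
       \<and> bnd C z (Vc \<sigma> b) \<noteq> 0 \<and> smin C \<sigma> = b
     \<longrightarrow> \<not> in_image C p (Koc C (b - 1) d) (Koc C b d) z
       \<and> \<not> in_image C p (Koc C b (d - 1)) (Koc C b d) z)
  \<and> (\<forall>(z :: 'a cell \<Rightarrow> 'f) \<tau> \<sigma>.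
       rel_cycle C p (Kco C n b d) z \<and> z (Vc \<tau> b) \<noteq> 0 \<and> smax C \<tau> = b
       \<and> bnd C z (Vc \<sigma> d) \<noteq> 0 \<and> smax C \<sigma> = d
     \<longrightarrow> \<not> in_image C p (Kco C n (b + 1) d) (Kco C n b d) z
       \<and> \<not> in_image C p (Kco C n b (d + 1)) (Kco C n b d) z)
  \<and> (\<forall>(z :: 'a cell \<Rightarrow> 'f) \<tau> \<sigma>.
       rel_cycle C p (Kcc C b d) z \<and> z (Vc \<sigma> b) \<noteq> 0 \<and> smax C \<sigma> = b
       \<and> z (Vc \<tau> d) \<noteq> 0 \<and> smin C \<tau> = d
     \<longrightarrow> \<not> in_image C p (Kcc C (b + 1) d) (Kcc C b d) z
       \<and> \<not> in_image C p (Kcc C b (d - 1)) (Kcc C b d) z)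
  \<and> (\<forall>(z :: 'a cell \<Rightarrow> 'f) \<tau> \<sigma>.
       rel_cycle C p (Koo C n b d) z
       \<and> bnd C z (Vc \<sigma> b) \<noteq> 0 \<and> smin C \<sigma> = b
       \<and> bnd C z (Vc \<tau> d) \<noteq> 0 \<and> smax C \<tau> = d
     \<longrightarrow> \<not> in_image C p (Koo C n (b - 1) d) (Koo C n b d) z
       \<and> \<not> in_image C p (Koo C n b (d + 1)) (Koo C n b d) z)"
  by (intro conjI; intro allI impI; elim conjE)
    (rule not_in_image_Koc[OF assms(1,4)] not_in_image_Kco[OF assms(1,4)]
      not_in_image_Kcc[OF assms(1)] not_in_image_Koo[OF assms(1,4)]; assumption)+

end
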